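(* Let $\mathcal{Q}\subseteq\mathcal{P}_Z$ be non-empty and, for each $\mathbb{Q}\in\mathcal{Q}$, let $l_{\mathbb{Q}}:\mathbb{R}\to\mathbb{R}$ satisfy: (l1) each $l_{\mathbb{Q}}$ is increasing and convex with $\lim_{x\to\pm\infty}(l_{\mathbb{Q}}(x)-x)=+\infty$; (l2) $\sup_{\mathbb{Q}\in\mathcal{Q}}\mathbb{E}^{\mathbb{Q}}l_{\mathbb{Q}}(\varphi(Z))<\infty$ for some increasing function $\varphi:[1,\infty)\to\mathbb{R}$ with $\lim_{x\to\infty}\varphi(x)/x=+\infty$; (l3) $l^*_{\mathbb{Q}}(1)=0$ for all $\mathbb{Q}\in\mathcal{Q}$, where $l^*_{\mathbb{Q}}(y)=\sup_{x\in\mathbb{R}}(xy-l_{\mathbb{Q}}(x))$. For $X\in B_Z$ let $\rho_{\mathbb{Q}}(X)=\inf_{s\in\mathbb{R}}(\mathbb{E}^{\mathbb{Q}}l_{\mathbb{Q}}(s-X)-s)$. Then for every $\mathbb{Q}\in\mathcal{Q}$, $\rho_{\mathbb{Q}}$ is a real-valued convex risk measure on $B_Z$ with $\rho_{\mathbb{Q}}(0)=0$ and $$\rho_{\mathbb{Q}}(X)=\max_{\mathbb{P}\in\mathcal{P}_Z,\,\mathbb{P}\ll\mathbb{Q}}\Big(\mathbb{E}^{\mathbb{P}}[-X]-\mathbb{E}^{\mathbb{Q}}\Big[l^*_{\mathbb{Q}}\Big(\frac{d\mathbb{P}}{d\mathbb{Q}}\Big)\Big]\Big),\quad X\in B_Z.$$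 Moreover, the set $A=\bigcap_{\mathbb{Q}\in\mathcal{Q}}\{X\in B_Z:\rho_{\mathbb{Q}}(X)\le0\}+B^+$ is of the form $A=\{X\in B_Z:\mathbb{E}^{\mathbb{P}}X+\alpha(\mathbb{P})\ge0\text{ for all }\mathbb{P}\in\mathcal{P}_Z\}+B^+$ for a mapping $\alpha:\mathcal{P}_Z\to\mathbb{R}_+\cup\{+\infty\}$ satisfying (A1) $\inf_{\mathbb{P}\in\mathcal{P}_Z}\alpha(\mathbb{P})=0$ and (A2) $\alpha(\mathbb{P})\ge\mathbb{E}^{\mathbb{P}}\beta(Z)$ for all $\mathbb{P}\in\mathcal{P}_Z$ for some increasing $\beta:[1,\infty)\to\mathbb{R}$ with $\lim_{x\to\infty}\beta(x)/x=+\infty$.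
   Context: Fix integers $J\ge0$, $T\ge1$. $\Omega$ is a non-empty subset of $((0,\infty)\times\mathbb{R}^J)^T$ with the Euclidean metric. $B$ is the space of Borel functions $X:\Omega\to\mathbb{R}$, $B^+=\{X\in B:X\ge0\}$. $Z:\Omega\to[1,\infty)$ is continuous with $\{Z\le z\}$ compact for all $z\in\mathbb{R}_+$. $B_Z=\{X\in B:X/Z\text{ bounded}\}$, and $\mathcal{P}_Z$ is the set of Borel probability measures $\mathbb{P}$ on $\Omega$ with $\mathbb{E}^{\mathbb{P}}Z<\infty$. "Increasing" means $f(x)\ge f(y)$ for $x\ge y$. A convex risk measure on $B_Z$ is a map $\rho:B_Z\to\mathbb{R}$ that is decreasing ($\rho(X)\le\rho(Y)$ if $X\ge Y$), convex, and satisfies $\rho(X+m)=\rho(X)-m$ for $m\in\mathbb{R}$. Sums of sets are Minkowski sums; $x+(+\infty)=+\infty$. *)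

theory Defs
  imports "HOL-Probability.Probability"
begin

text \<open>Borel functions on \<Omega> (w.r.t. the Borel sigma-algebra of the subspace \<Omega>).
  Values outside \<Omega> are irrelevant and unconstrained.\<close>
definition Bfun :: "'a::topological_space set \<Rightarrow> ('a \<Rightarrow> real) set" where
  "Bfun \<Omega> = borel_measurable (restrict_space borel \<Omega>)"

definition BZ :: "'a::topological_space set \<Rightarrow> ('a \<Rightarrow> real) \<Rightarrow> ('a \<Rightarrow> real) set" where
  "BZ \<Omega> Z = {X \<in> Bfun \<Omega>. \<exists>c. \<forall>\<omega>\<in>\<Omega>. \<bar>X \<omega> / Z \<omega>\<bar> \<le> c}"

definition Bplus :: "'a::topological_space set \<Rightarrow> ('a \<Rightarrow> real) set" where
  "Bplus \<Omega> = {X \<in> Bfun \<Omega>. \<forall>\<omega>\<in>\<Omega>. 0 \<le> X \<omega>}"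

definition PZ :: "'a::topological_space set \<Rightarrow> ('a \<Rightarrow> real) \<Rightarrow> 'a measure set" where
  "PZ \<Omega> Z = {P. prob_space P \<and> sets P = sets (restrict_space borel \<Omega>) \<and> integrable P Z}"

text \<open>Extended-real expectation: positive part minus negative part
  (used only for functions whose negative part has finite integral).\<close>
definition eexp :: "'a measure \<Rightarrow> ('a \<Rightarrow> ereal) \<Rightarrow> ereal" where
  "eexp M f = enn2ereal (\<integral>\<^sup>+x. e2ennreal (f x) \<partial>M) - enn2ereal (\<integral>\<^sup>+x. e2ennreal (- f x) \<partial>M)"

definition conj_fn :: "(real \<Rightarrow> real) \<Rightarrow> real \<Rightarrow> ereal" where
  "conj_fn l y = (SUP x. ereal (x * y - l x))"

definition rho :: "'a measure \<Rightarrow> (real \<Rightarrow> real) \<Rightarrow> ('a \<Rightarrow> real) \<Rightarrow> ereal" where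
  "rho Q l X = (INF s. eexp Q (\<lambda>\<omega>. ereal (l (s - X \<omega>))) - ereal s)"

definition convex_risk_measure :: "'a set \<Rightarrow> ('a \<Rightarrow> real) set \<Rightarrow> (('a \<Rightarrow> real) \<Rightarrow> real) \<Rightarrow> bool" where
  "convex_risk_measure \<Omega> D \<rho> \<longleftrightarrow>
     (\<forall>X\<in>D. \<forall>Y\<in>D. (\<forall>\<omega>\<in>\<Omega>. Y \<omega> \<le> X \<omega>) \<longrightarrow> \<rho> X \<le> \<rho> Y) \<and>
     (\<forall>X\<in>D. \<forall>Y\<in>D. \<forall>t::real. 0 \<le> t \<and> t \<le> 1 \<longrightarrow>
        \<rho> (\<lambda>\<omega>. t * X \<omega> + (1 - t) * Y \<omega>) \<le> t * \<rho> X + (1 - t) * \<rho> Y) \<and>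
     (\<forall>X\<in>D. \<forall>m::real. \<rho> (\<lambda>\<omega>. X \<omega> + m) = \<rho> X - m)"

definition msum :: "('a \<Rightarrow> real) set \<Rightarrow> ('a \<Rightarrow> real) set \<Rightarrow> ('a \<Rightarrow> real) set" where
  "msum S T = {(\<lambda>\<omega>. X \<omega> + Y \<omega>) | X Y. X \<in> S \<and> Y \<in> T}"

end

theory Submission
  imports Defs
begin

text \<open>
  The objective s \<mapsto> E_Q l(s - X) - s is convex, and since l(x) - x grows at least
  linearly at both ends it is coercive; hence it attains its infimum at some s0 and
  rho_Q(X) is finite. Minimality of s0 says that the right derivative of l at s0 - X has
  Q-expectation at least 1 and the left derivative at most 1, so a convex combination D of the
  two is a probability density with D(\<omega>) a subgradient of l at s0 - X(\<omega>). For such D the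
  Fenchel-Young inequality is an equality, l*(D) = (s0 - X) D - l(s0 - X), so P = D Q attains
  the dual representation, whereas Fenchel-Young at an arbitrary s bounds the dual value of every
  other P by the objective at s. The superlinear growth of \<phi> in (l2) makes E_P Z finite.

  For the acceptance set, \<alpha>(P) is the infimum of E_Q l*(dP/dQ) over those Q with P \<ll> Q;
  Fenchel-Young at x = \<phi>(Z) together with (l2) gives \<alpha>(P) \<ge> E_P \<phi>(Z) - C.
\<close>

section \<open>Slopes and one-sided derivatives of convex functions\<close>

definition slope :: "(real \<Rightarrow> real) \<Rightarrow> real \<Rightarrow> real \<Rightarrow> real" where
  "slope f x y = (f y - f x) / (y - x)"

lemma slope_swap: "slope f x y = (f x - f y) / (x - y)"
  unfolding slope_def by (metis minus_diff_eq minus_divide_divide)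

lemma convex_on_slope_mono:
  fixes f :: "real \<Rightarrow> real"
  assumes f: "convex_on UNIV f" and "x < y" "u < v" "x \<le> u" "y \<le> v"
  shows "slope f x y \<le> slope f u v"
proof -
  have "slope f x y \<le> slope f x v"
  proof (cases "y = v")
    case False
    then show ?thesis
      using convex_on_slope_le(1)[OF f _ _, of x v y] assms by (simp add: slope_swap)
  qed simp
  also have "\<dots> \<le> slope f u v"
  proof (cases "x = u")
    case False
    then show ?thesis
      using convex_on_slope_le(2)[OF f _ _, of x v u] assms by (simp add: slope_swap)
  qed simp
  finally show ?thesis .
qed

lemma mono_slope_nonneg: "mono f \<Longrightarrow> x < y \<Longrightarrow> 0 \<le> slope f x y"
  unfolding slope_def by (simp add: mono_def)

lemma slope_ge_iff: "x < y \<Longrightarrow> g \<le> slope f x y \<longleftrightarrow> g * (y - x) \<le> f y - f x"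
  unfolding slope_def by (simp add: pos_le_divide_eq)

lemma slope_le_iff: "x < y \<Longrightarrow> slope f x y \<le> g \<longleftrightarrow> f y - f x \<le> g * (y - x)"
  unfolding slope_def by (simp add: pos_divide_le_eq)

text \<open>One-sided derivatives are taken as limits along h = 1/(n+1): the dominated convergence
  argument for E_Q l(s - X) needs sequences.\<close>

definition right_deriv :: "(real \<Rightarrow> real) \<Rightarrow> real \<Rightarrow> real" where
  "right_deriv f a = lim (\<lambda>n. slope f a (a + 1 / Suc n))"

definition left_deriv :: "(real \<Rightarrow> real) \<Rightarrow> real \<Rightarrow> real" where
  "left_deriv f a = lim (\<lambda>n. slope f (a - 1 / Suc n) a)"

lemma eventually_inverse_Suc_le:
  assumes "0 < h" shows "eventually (\<lambda>n. 1 / real (Suc n) \<le> h) sequentially"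
  using order_tendstoD(2)[OF LIMSEQ_inverse_real_of_nat assms]
  by eventually_elim (simp add: inverse_eq_divide)

definition is_subgradient :: "(real \<Rightarrow> real) \<Rightarrow> real \<Rightarrow> real \<Rightarrow> bool" where
  "is_subgradient f a g \<longleftrightarrow> (\<forall>b. f a + g * (b - a) \<le> f b)"

context
  fixes f :: "real \<Rightarrow> real"
  assumes f: "convex_on UNIV f"
begin

lemma right_deriv_LIMSEQ: "(\<lambda>n. slope f a (a + 1 / Suc n)) \<longlonglongrightarrow> right_deriv f a"
proof -
  have "decseq (\<lambda>n. slope f a (a + 1 / Suc n))"
    by (rule decseq_SucI) (auto intro!: convex_on_slope_mono[OF f] simp: frac_le)
  moreover have "slope f (a - 1) a \<le> slope f a (a + 1 / Suc n)" for n
    by (auto intro!: convex_on_slope_mono[OF f])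
  ultimately obtain L where "(\<lambda>n. slope f a (a + 1 / Suc n)) \<longlonglongrightarrow> L"
    by (metis decseq_convergent)
  then show ?thesis unfolding right_deriv_def by (simp add: limI)
qed

lemma left_deriv_LIMSEQ: "(\<lambda>n. slope f (a - 1 / Suc n) a) \<longlonglongrightarrow> left_deriv f a"
proof -
  have "incseq (\<lambda>n. slope f (a - 1 / Suc n) a)"
    by (rule incseq_SucI) (auto intro!: convex_on_slope_mono[OF f] simp: frac_le)
  moreover have "slope f (a - 1 / Suc n) a \<le> slope f a (a + 1)" for n
    by (auto intro!: convex_on_slope_mono[OF f])
  ultimately obtain L where "(\<lambda>n. slope f (a - 1 / Suc n) a) \<longlonglongrightarrow> L"
    by (metis incseq_convergent)
  then show ?thesis unfolding left_deriv_def by (simp add: limI)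
qed

lemma right_deriv_le_slope:
  assumes "a < b" shows "right_deriv f a \<le> slope f a b"
proof -
  have "eventually (\<lambda>n. slope f a (a + 1 / Suc n) \<le> slope f a b) sequentially"
    using eventually_inverse_Suc_le[of "b - a"] assms
    by (auto elim!: eventually_mono intro!: convex_on_slope_mono[OF f])
  then show ?thesis by (rule tendsto_upperbound[OF right_deriv_LIMSEQ]) simp
qed

lemma slope_le_left_deriv:
  assumes "b < a" shows "slope f b a \<le> left_deriv f a"
proof -
  have "eventually (\<lambda>n. slope f b a \<le> slope f (a - 1 / Suc n) a) sequentially"
    using eventually_inverse_Suc_le[of "a - b"] assms
    by (auto elim!: eventually_mono intro!: convex_on_slope_mono[OF f])
  then show ?thesis by (rule tendsto_lowerbound[OF left_deriv_LIMSEQ]) simp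
qed

lemma left_deriv_le_right_deriv: "left_deriv f a \<le> right_deriv f a"
  by (rule tendsto_le[OF _ right_deriv_LIMSEQ left_deriv_LIMSEQ])
     (auto intro!: always_eventually convex_on_slope_mono[OF f])

lemma is_subgradient_between:
  assumes "left_deriv f a \<le> g" "g \<le> right_deriv f a"
  shows "is_subgradient f a g"
  unfolding is_subgradient_def
proof
  fix b
  show "f a + g * (b - a) \<le> f b"
  proof (cases b a rule: linorder_cases)
    case less
    then have "slope f b a \<le> g" using slope_le_left_deriv assms(1) by (meson order_trans)
    then have "f a - f b \<le> g * (a - b)" using less by (simp add: slope_le_iff)
    moreover have "g * (b - a) = - (g * (a - b))" by (simp add: algebra_simps)
    ultimately show ?thesis by linarith
  next
    case greater
    then have "g \<le> slope f a b" using right_deriv_le_slope assms(2) by (meson order_trans)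
    then have "g * (b - a) \<le> f b - f a" using greater by (simp add: slope_ge_iff)
    then show ?thesis by linarith
  qed simp
qed

lemma left_deriv_nonneg: "mono f \<Longrightarrow> 0 \<le> left_deriv f a"
  by (rule tendsto_lowerbound[OF left_deriv_LIMSEQ]) (auto intro!: always_eventually mono_slope_nonneg)

lemma borel_measurable_convex_on[measurable]: "f \<in> borel_measurable borel"
  using convex_on_continuous[of UNIV f] f by (intro borel_measurable_continuous_onI) auto

lemma borel_measurable_right_deriv[measurable]: "right_deriv f \<in> borel_measurable borel"
  by (rule borel_measurable_LIMSEQ_real[OF right_deriv_LIMSEQ]) (unfold slope_def, measurable)

lemma borel_measurable_left_deriv[measurable]: "left_deriv f \<in> borel_measurable borel"
  by (rule borel_measurable_LIMSEQ_real[OF left_deriv_LIMSEQ]) (unfold slope_def, measurable)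

end

lemma conj_fn_ge: "ereal (x * y - l x) \<le> conj_fn l y"
  unfolding conj_fn_def by (rule SUP_upper) simp

lemma conj_fn_subgradient:
  assumes "is_subgradient l a g" shows "conj_fn l g = ereal (a * g - l a)"
proof (rule antisym)
  show "conj_fn l g \<le> ereal (a * g - l a)"
    unfolding conj_fn_def
  proof (rule SUP_least)
    fix x
    have "l a + g * (x - a) \<le> l x" using assms unfolding is_subgradient_def by blast
    then show "ereal (x * g - l x) \<le> ereal (a * g - l a)" by (simp add: algebra_simps)
  qed
qed (rule conj_fn_ge)

section \<open>Coercive convex functions\<close>

lemma convex_at_top_linear_lower_bound:
  fixes h :: "real \<Rightarrow> real"
  assumes cv: "convex_on UNIV h" and nonneg: "\<And>y. 0 \<le> h y" and lim: "filterlim h at_top at_top"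
  shows "\<exists>M>0. \<forall>y\<ge>0. y / M - 1 \<le> h y"
proof -
  obtain N where N: "\<And>y. N \<le> y \<Longrightarrow> h 0 + 1 \<le> h y"
    using lim by (auto simp: filterlim_at_top eventually_at_top_linorder)
  define M where "M = max N 1"
  have M: "1 \<le> M" "h 0 + 1 \<le> h M" using N by (auto simp: M_def)
  have "y / M - 1 \<le> h y" if "0 \<le> y" for y
  proof (cases "M < y")
    case True
    have "1 / M \<le> slope h 0 M" using M by (simp add: slope_def divide_right_mono)
    also have "\<dots> \<le> slope h M y" using True M by (intro convex_on_slope_mono[OF cv]) auto
    finally have "1 / M * (y - M) \<le> h y - h M" using True by (simp add: slope_ge_iff)
    moreover have "1 / M * (y - M) = y / M - 1" using M by (simp add: field_simps)
    ultimately show ?thesis using nonneg[of M] by linarith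
  next
    case False
    then have "y / M \<le> 1" using M by (simp add: divide_le_eq)
    then show ?thesis using nonneg[of y] by linarith
  qed
  then show ?thesis using M by (intro exI[of _ M]) auto
qed

lemma convex_on_reflect:
  fixes h :: "real \<Rightarrow> real"
  assumes "convex_on UNIV h" shows "convex_on UNIV (\<lambda>x. h (- x))"
proof (rule convex_onI)
  fix t x y :: real assume "0 < t" "t < 1"
  then show "h (- ((1 - t) *\<^sub>R x + t *\<^sub>R y)) \<le> (1 - t) * h (- x) + t * h (- y)"
    using convex_onD[OF assms, of t "-x" "-y"] by (simp add: algebra_simps)
qed auto

lemma convex_coercive_lower_bound:
  fixes h :: "real \<Rightarrow> real"
  assumes cv: "convex_on UNIV h" and nonneg: "\<And>y. 0 \<le> h y"
    and top: "filterlim h at_top at_top" and bot: "filterlim h at_top at_bot"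
  shows "\<exists>a>0. \<exists>b. \<forall>y. a * \<bar>y\<bar> - b \<le> h y"
proof -
  obtain M1 where M1: "M1 > 0" "\<And>y. y \<ge> 0 \<Longrightarrow> y / M1 - 1 \<le> h y"
    using convex_at_top_linear_lower_bound[OF cv nonneg top] by blast
  have "filterlim (\<lambda>y. h (- y)) at_top at_top"
    using bot by (simp add: filterlim_at_bot_mirror)
  then obtain M2 where M2: "M2 > 0" "\<And>y. y \<ge> 0 \<Longrightarrow> y / M2 - 1 \<le> h (- y)"
    using convex_at_top_linear_lower_bound[OF convex_on_reflect[OF cv] nonneg] by blast
  define a where "a = min (1 / M1) (1 / M2)"
  have "a * \<bar>y\<bar> - 1 \<le> h y" for y
  proof (cases "0 \<le> y")
    case True
    have "a * \<bar>y\<bar> \<le> 1 / M1 * \<bar>y\<bar>" by (intro mult_right_mono) (auto simp: a_def)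
    then show ?thesis using M1(2)[OF True] True by simp
  next
    case False
    have "a * \<bar>y\<bar> \<le> 1 / M2 * \<bar>y\<bar>" by (intro mult_right_mono) (auto simp: a_def)
    then show ?thesis using M2(2)[of "- y"] False by simp
  qed
  moreover have "a > 0" using M1 M2 by (simp add: a_def)
  ultimately show ?thesis by blast
qed

lemma continuous_coercive_attains_min:
  fixes F :: "real \<Rightarrow> real"
  assumes cont: "continuous_on UNIV F" and "a > 0" and coercive: "\<And>s. a * \<bar>s\<bar> - b \<le> F s"
  shows "\<exists>s0. \<forall>s. F s0 \<le> F s"
proof -
  define R where "R = (b + \<bar>F 0\<bar> + 1) / a"
  have "R \<ge> 0" using coercive[of 0] \<open>a > 0\<close> by (simp add: R_def)
  then obtain s0 where s0: "\<And>s. s \<in> cball 0 R \<Longrightarrow> F s0 \<le> F s"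
    using continuous_attains_inf[OF _ _ continuous_on_subset[OF cont]] by (metis compact_cball
      cball_eq_empty not_less subset_UNIV)
  have "F s0 \<le> F s" for s
  proof (cases "s \<in> cball 0 R")
    case False
    then have "a * R \<le> a * \<bar>s\<bar>" using \<open>a > 0\<close> by simp
    moreover have "a * R = b + \<bar>F 0\<bar> + 1" using \<open>a > 0\<close> by (simp add: R_def)
    ultimately show ?thesis using coercive[of s] s0[of 0] \<open>R \<ge> 0\<close> by simp
  qed (use s0 in auto)
  then show ?thesis by blast
qed

lemma conj_fn_one_eq_0_imp_ge:
  assumes "conj_fn l 1 = 0" shows "y \<le> l y"
  using conj_fn_ge[of y 1 l] assms by simp

lemma conj_fn_one_eq_0_imp_fixed_point:
  fixes l :: "real \<Rightarrow> real"
  assumes cv: "convex_on UNIV l"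
    and top: "filterlim (\<lambda>x. l x - x) at_top at_top" and bot: "filterlim (\<lambda>x. l x - x) at_top at_bot"
    and conj: "conj_fn l 1 = 0"
  shows "\<exists>x. l x = x"
proof -
  have cv': "convex_on UNIV (\<lambda>x. l x - x)"
    by (intro convex_on_diff cv) (simp add: concave_on_ident)
  have "\<And>y. 0 \<le> l y - y" using conj_fn_one_eq_0_imp_ge[OF conj] by simp
  then obtain a b where "a > 0" "\<And>y. a * \<bar>y\<bar> - b \<le> l y - y"
    using convex_coercive_lower_bound[OF cv' _ top bot] by blast
  moreover have "continuous_on UNIV (\<lambda>x. l x - x)"
    using convex_on_continuous[OF _ cv'] by simp
  ultimately obtain x0 where "\<And>x. l x0 - x0 \<le> l x - x"
    using continuous_coercive_attains_min by blast
  then have "is_subgradient l x0 1" unfolding is_subgradient_def by (simp add: algebra_simps)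
  then have "l x0 = x0" using conj_fn_subgradient[of l x0 1] conj by simp
  then show ?thesis ..
qed

lemma superlinear_minus_const:
  fixes \<phi> :: "real \<Rightarrow> real"
  assumes "filterlim (\<lambda>x. \<phi> x / x) at_top at_top"
  shows "filterlim (\<lambda>x. (\<phi> x - C) / x) at_top at_top"
proof -
  have "((\<lambda>x. - C * inverse x) \<longlongrightarrow> - C * 0) at_top"
    by (intro tendsto_mult tendsto_const tendsto_inverse_0_at_top filterlim_ident)
  from filterlim_tendsto_add_at_top[OF this assms]
  show ?thesis by (simp add: diff_divide_distrib divide_inverse algebra_simps)
qed

lemma eexp_ereal:
  fixes g :: "'a \<Rightarrow> real"
  assumes g: "integrable M g"
  shows "eexp M (\<lambda>x. ereal (g x)) = ereal (integral\<^sup>L M g)"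
proof -
  have "(\<integral>\<^sup>+x. ennreal (g x) \<partial>M) \<noteq> \<infinity>" "(\<integral>\<^sup>+x. ennreal (- g x) \<partial>M) \<noteq> \<infinity>"
    using g by (auto simp: real_integrable_def)
  then show ?thesis
    unfolding eexp_def real_lebesgue_integral_def[OF g]
    by (cases rule: ennreal2_cases[of "\<integral>\<^sup>+x. ennreal (g x) \<partial>M" "\<integral>\<^sup>+x. ennreal (- g x) \<partial>M"]) auto
qed

lemma eexp_mono:
  assumes "\<And>x. x \<in> space M \<Longrightarrow> f x \<le> g x"
  shows "eexp M f \<le> eexp M g"
  unfolding eexp_def
proof (rule ereal_minus_mono)
  have "(\<integral>\<^sup>+x. e2ennreal (f x) \<partial>M) \<le> (\<integral>\<^sup>+x. e2ennreal (g x) \<partial>M)"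
    using assms by (intro nn_integral_mono e2ennreal_mono) auto
  then show "enn2ereal (\<integral>\<^sup>+x. e2ennreal (f x) \<partial>M) \<le> enn2ereal (\<integral>\<^sup>+x. e2ennreal (g x) \<partial>M)"
    by (simp add: less_eq_ennreal.rep_eq)
  have "(\<integral>\<^sup>+x. e2ennreal (- g x) \<partial>M) \<le> (\<integral>\<^sup>+x. e2ennreal (- f x) \<partial>M)"
    using assms by (intro nn_integral_mono e2ennreal_mono) auto
  then show "enn2ereal (\<integral>\<^sup>+x. e2ennreal (- g x) \<partial>M) \<le> enn2ereal (\<integral>\<^sup>+x. e2ennreal (- f x) \<partial>M)"
    by (simp add: less_eq_ennreal.rep_eq)
qed

lemma eexp_cong_AE:
  assumes "AE x in M. f x = g x"
  shows "eexp M f = eexp M g"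
proof -
  have "(\<integral>\<^sup>+x. e2ennreal (f x) \<partial>M) = (\<integral>\<^sup>+x. e2ennreal (g x) \<partial>M)"
    using assms by (intro nn_integral_cong_AE) auto
  moreover have "(\<integral>\<^sup>+x. e2ennreal (- f x) \<partial>M) = (\<integral>\<^sup>+x. e2ennreal (- g x) \<partial>M)"
    using assms by (intro nn_integral_cong_AE) auto
  ultimately show ?thesis unfolding eexp_def by simp
qed

lemma eexp_eq_PInf:
  fixes g w :: "'a \<Rightarrow> real"
  assumes "g \<in> borel_measurable M" and "integrable M w"
    and le: "\<And>x. x \<in> space M \<Longrightarrow> w x \<le> g x" and "\<not> integrable M g"
  shows "eexp M (\<lambda>x. ereal (g x)) = \<infinity>"
proof -
  have "(\<integral>\<^sup>+x. ennreal (- g x) \<partial>M) \<le> (\<integral>\<^sup>+x. ennreal (norm (w x)) \<partial>M)"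
    using le by (intro nn_integral_mono ennreal_leI) force
  also have "\<dots> < \<infinity>" using \<open>integrable M w\<close> by (simp add: integrable_iff_bounded)
  finally have neg: "(\<integral>\<^sup>+x. ennreal (- g x) \<partial>M) \<noteq> \<infinity>" by simp
  then have "(\<integral>\<^sup>+x. ennreal (g x) \<partial>M) = \<infinity>"
    using assms(1,4) by (auto simp: real_integrable_def top_unique)
  then show ?thesis unfolding eexp_def using neg by (simp add: less_top)
qed

lemma integrable_abs_bounded:
  fixes f g :: "'a \<Rightarrow> real"
  assumes "integrable M g" "f \<in> borel_measurable M" "\<And>x. x \<in> space M \<Longrightarrow> \<bar>f x\<bar> \<le> g x"
  shows "integrable M f"
  using assms by (intro Bochner_Integration.integrable_bound[OF assms(1,2)] AE_I2) force

definition divergence :: "'a measure \<Rightarrow> (real \<Rightarrow> real) \<Rightarrow> 'a measure \<Rightarrow> ereal" where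
  "divergence Q l P = eexp Q (\<lambda>\<omega>. conj_fn l (enn2real (RN_deriv Q P \<omega>)))"

lemma eexp_conj_fn_ge:
  assumes "integrable M (\<lambda>\<omega>. u \<omega> * d \<omega> - l (u \<omega>))"
  shows "ereal (\<integral>\<omega>. u \<omega> * d \<omega> - l (u \<omega>) \<partial>M) \<le> eexp M (\<lambda>\<omega>. conj_fn l (d \<omega>))"
  unfolding eexp_ereal[OF assms, symmetric] by (intro eexp_mono conj_fn_ge)

section \<open>The risk measure of a single loss function\<close>

text \<open>\<open>\<phi>\<close> and \<open>C\<close> are the witnesses of (l2).\<close>

locale loss_risk = prob_space Q
  for Q :: "'a::topological_space measure" +
  fixes \<Omega> :: "'a set" and Z :: "'a \<Rightarrow> real" and l :: "real \<Rightarrow> real"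
    and \<phi> :: "real \<Rightarrow> real" and C :: real
  assumes sets_Q: "sets Q = sets (restrict_space borel \<Omega>)"
    and integrable_Z: "integrable Q Z"
    and Z_ge_1: "\<forall>\<omega>\<in>\<Omega>. 1 \<le> Z \<omega>" and continuous_Z: "continuous_on \<Omega> Z"
    and mono_l: "mono l" and convex_l: "convex_on UNIV l"
    and l_minus_id_top: "filterlim (\<lambda>x. l x - x) at_top at_top"
    and l_minus_id_bot: "filterlim (\<lambda>x. l x - x) at_top at_bot"
    and conj_l_one: "conj_fn l 1 = 0"
    and mono_phi: "mono_on {1..} \<phi>"
    and phi_superlinear: "filterlim (\<lambda>x. \<phi> x / x) at_top at_top"
    and integrable_l_phi_Z: "integrable Q (\<lambda>\<omega>. l (\<phi> (Z \<omega>)))"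
    and integral_l_phi_Z_le: "(\<integral>\<omega>. l (\<phi> (Z \<omega>)) \<partial>Q) \<le> C"
begin

lemma space_Q: "space Q = \<Omega>"
  using sets_eq_imp_space_eq[OF sets_Q] by (simp add: space_restrict_space)

lemma measurable_Q_iff_Bfun: "f \<in> borel_measurable Q \<longleftrightarrow> f \<in> Bfun \<Omega>"
  unfolding Bfun_def by (simp only: measurable_cong_sets[OF sets_Q refl])

lemma borel_measurable_Z[measurable]: "Z \<in> borel_measurable Q"
  using measurable_Q_iff_Bfun borel_measurable_continuous_on_restrict[OF continuous_Z]
  by (simp add: Bfun_def)

lemma one_le_Z: "\<omega> \<in> space Q \<Longrightarrow> 1 \<le> Z \<omega>"
  using Z_ge_1 space_Q by auto

lemmas borel_measurable_l[measurable] = borel_measurable_convex_on[OF convex_l]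

lemma l_ge: "y \<le> l y"
  using conj_fn_one_eq_0_imp_ge[OF conj_l_one] .

lemma l_fixed_point: "\<exists>x. l x = x"
  using conj_fn_one_eq_0_imp_fixed_point[OF convex_l l_minus_id_top l_minus_id_bot conj_l_one] .

lemma phi_dominates_linear: "\<exists>z0\<ge>1. \<forall>x\<ge>z0. k * x \<le> \<phi> x"
proof -
  obtain N where N: "\<And>x. N \<le> x \<Longrightarrow> k \<le> \<phi> x / x"
    using phi_superlinear by (auto simp: filterlim_at_top eventually_at_top_linorder)
  have "k * x \<le> \<phi> x" if "max N 1 \<le> x" for x
    using N[of x] that by (simp add: le_divide_eq)
  then show ?thesis by (intro exI[of _ "max N 1"]) auto
qed

lemma borel_measurable_phi_Z[measurable]: "(\<lambda>\<omega>. \<phi> (Z \<omega>)) \<in> borel_measurable Q"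
proof -
  have "mono (\<lambda>x. \<phi> (max x 1))"
    using mono_phi unfolding mono_def mono_on_def by auto
  then have [measurable]: "(\<lambda>x. \<phi> (max x 1)) \<in> borel_measurable borel"
    by (rule borel_measurable_mono)
  have "(\<lambda>\<omega>. \<phi> (max (Z \<omega>) 1)) \<in> borel_measurable Q" by measurable
  then show ?thesis
    by (rule measurable_cong[THEN iffD1, rotated]) (simp add: one_le_Z max_absorb1)
qed

lemma Q_in_PZ: "Q \<in> PZ \<Omega> Z"
  unfolding PZ_def using sets_Q integrable_Z prob_space_axioms by auto

lemma PZ_iff: "P \<in> PZ \<Omega> Z \<longleftrightarrow> prob_space P \<and> sets P = sets Q \<and> integrable P Z"
  unfolding PZ_def sets_Q by simp

definition Z_dominated :: "('a \<Rightarrow> real) \<Rightarrow> bool" where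
  "Z_dominated X \<longleftrightarrow> X \<in> borel_measurable Q \<and> (\<exists>c\<ge>0. \<forall>\<omega>\<in>space Q. \<bar>X \<omega>\<bar> \<le> c * Z \<omega>)"

lemma BZ_iff_Z_dominated: "X \<in> BZ \<Omega> Z \<longleftrightarrow> Z_dominated X"
proof
  assume "X \<in> BZ \<Omega> Z"
  then obtain c where m: "X \<in> Bfun \<Omega>" and c: "\<And>\<omega>. \<omega> \<in> \<Omega> \<Longrightarrow> \<bar>X \<omega> / Z \<omega>\<bar> \<le> c"
    unfolding BZ_def by auto
  have "\<bar>X \<omega>\<bar> \<le> max c 0 * Z \<omega>" if "\<omega> \<in> space Q" for \<omega>
  proof -
    have "\<bar>X \<omega>\<bar> / Z \<omega> \<le> max c 0" using c[of \<omega>] that one_le_Z[OF that] space_Q by (auto simp: abs_divide)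
    then show ?thesis using one_le_Z[OF that] by (simp add: divide_le_eq)
  qed
  then show "Z_dominated X" using m measurable_Q_iff_Bfun unfolding Z_dominated_def
    by (intro conjI exI[of _ "max c 0"]) auto
next
  assume "Z_dominated X"
  then obtain c where m: "X \<in> borel_measurable Q" and c: "\<And>\<omega>. \<omega> \<in> space Q \<Longrightarrow> \<bar>X \<omega>\<bar> \<le> c * Z \<omega>"
    unfolding Z_dominated_def by auto
  have "\<bar>X \<omega> / Z \<omega>\<bar> \<le> c" if "\<omega> \<in> \<Omega>" for \<omega>
    using c[of \<omega>] one_le_Z[of \<omega>] that space_Q by (auto simp: abs_divide divide_le_eq)
  then show "X \<in> BZ \<Omega> Z" using m measurable_Q_iff_Bfun unfolding BZ_def by auto
qed

lemma Z_dominated_integrable: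
  assumes "Z_dominated X" and sets_P: "sets P = sets Q" and "integrable P Z"
  shows "integrable P X"
proof -
  obtain c where m: "X \<in> borel_measurable Q" and c: "\<And>\<omega>. \<omega> \<in> space Q \<Longrightarrow> \<bar>X \<omega>\<bar> \<le> c * Z \<omega>"
    using assms(1) unfolding Z_dominated_def by auto
  have "integrable P (\<lambda>\<omega>. c * Z \<omega>)" using assms(3) by simp
  moreover have "X \<in> borel_measurable P" using m by (simp only: measurable_cong_sets[OF sets_P refl])
  moreover have "\<bar>X \<omega>\<bar> \<le> c * Z \<omega>" if "\<omega> \<in> space P" for \<omega>
    using c that sets_eq_imp_space_eq[OF sets_P] by simp
  ultimately show ?thesis by (rule integrable_abs_bounded)
qed

lemma Z_dominated_convex_comb:
  assumes "Z_dominated X" "Z_dominated Y" "0 \<le> t" "t \<le> 1"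
  shows "Z_dominated (\<lambda>\<omega>. t * X \<omega> + (1 - t) * Y \<omega>)"
proof -
  obtain c1 where c1: "c1 \<ge> 0" "\<And>\<omega>. \<omega> \<in> space Q \<Longrightarrow> \<bar>X \<omega>\<bar> \<le> c1 * Z \<omega>"
    and [measurable]: "X \<in> borel_measurable Q"
    using assms(1) unfolding Z_dominated_def by auto
  obtain c2 where c2: "c2 \<ge> 0" "\<And>\<omega>. \<omega> \<in> space Q \<Longrightarrow> \<bar>Y \<omega>\<bar> \<le> c2 * Z \<omega>"
    and [measurable]: "Y \<in> borel_measurable Q"
    using assms(2) unfolding Z_dominated_def by auto
  have "\<bar>t * X \<omega> + (1 - t) * Y \<omega>\<bar> \<le> (c1 + c2) * Z \<omega>" if "\<omega> \<in> space Q" for \<omega>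
  proof -
    have "\<bar>t * X \<omega> + (1 - t) * Y \<omega>\<bar> \<le> t * \<bar>X \<omega>\<bar> + (1 - t) * \<bar>Y \<omega>\<bar>"
      using assms(3,4) abs_triangle_ineq[of "t * X \<omega>" "(1 - t) * Y \<omega>"] by (simp add: abs_mult)
    also have "\<dots> \<le> \<bar>X \<omega>\<bar> + \<bar>Y \<omega>\<bar>"
      using assms(3,4) by (intro add_mono mult_left_le_one_le) auto
    also have "\<dots> \<le> (c1 + c2) * Z \<omega>"
      using c1(2)[OF that] c2(2)[OF that] by (simp add: distrib_right)
    finally show ?thesis .
  qed
  then show ?thesis unfolding Z_dominated_def using c1 c2 by (intro conjI exI[of _ "c1 + c2"]) auto
qed

lemma Z_dominated_add_const:
  assumes "Z_dominated X" shows "Z_dominated (\<lambda>\<omega>. X \<omega> + m)"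
proof -
  obtain c where c: "c \<ge> 0" "\<And>\<omega>. \<omega> \<in> space Q \<Longrightarrow> \<bar>X \<omega>\<bar> \<le> c * Z \<omega>"
    and [measurable]: "X \<in> borel_measurable Q"
    using assms unfolding Z_dominated_def by auto
  have "\<bar>X \<omega> + m\<bar> \<le> (c + \<bar>m\<bar>) * Z \<omega>" if "\<omega> \<in> space Q" for \<omega>
  proof -
    have "\<bar>m\<bar> \<le> \<bar>m\<bar> * Z \<omega>" using one_le_Z[OF that] by (simp add: mult_le_cancel_left1)
    then show ?thesis using c(2)[OF that] by (simp add: distrib_right)
  qed
  then show ?thesis unfolding Z_dominated_def using c by (intro conjI exI[of _ "c + \<bar>m\<bar>"]) auto
qed

definition expected_loss :: "('a \<Rightarrow> real) \<Rightarrow> real \<Rightarrow> real" where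
  "expected_loss X s = (\<integral>\<omega>. l (s - X \<omega>) \<partial>Q)"

definition objective :: "('a \<Rightarrow> real) \<Rightarrow> real \<Rightarrow> real" where
  "objective X s = expected_loss X s - s"

lemma integrable_loss:
  assumes "Z_dominated X" shows "integrable Q (\<lambda>\<omega>. l (s - X \<omega>))"
proof -
  obtain c where [measurable]: "X \<in> borel_measurable Q" and "c \<ge> 0"
    and c: "\<And>\<omega>. \<omega> \<in> space Q \<Longrightarrow> \<bar>X \<omega>\<bar> \<le> c * Z \<omega>"
    using assms unfolding Z_dominated_def by auto
  obtain z0 where z0: "\<And>x. z0 \<le> x \<Longrightarrow> (\<bar>s\<bar> + c) * x \<le> \<phi> x"
    using phi_dominates_linear by blast
  define K where "K = \<bar>l (s + c * z0)\<bar> + \<bar>s\<bar>"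
  show ?thesis
  proof (rule integrable_abs_bounded)
    show "integrable Q (\<lambda>\<omega>. K + \<bar>l (\<phi> (Z \<omega>))\<bar> + c * Z \<omega>)"
      using integrable_l_phi_Z integrable_Z by auto
    show "(\<lambda>\<omega>. l (s - X \<omega>)) \<in> borel_measurable Q" by measurable
    fix \<omega> assume \<omega>: "\<omega> \<in> space Q"
    have "s - X \<omega> \<le> s + c * Z \<omega>" using c[OF \<omega>] by auto
    have "l (s - X \<omega>) \<le> l (s + c * z0) \<or> l (s - X \<omega>) \<le> l (\<phi> (Z \<omega>))"
    proof (cases "z0 \<le> Z \<omega>")
      case True
      have "s + c * Z \<omega> \<le> (\<bar>s\<bar> + c) * Z \<omega>"
        using one_le_Z[OF \<omega>] mult_left_mono[of 1 "Z \<omega>" "\<bar>s\<bar>"] by (simp add: distrib_right)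
      then have "s - X \<omega> \<le> \<phi> (Z \<omega>)" using \<open>s - X \<omega> \<le> s + c * Z \<omega>\<close> z0[OF True] by linarith
      then show ?thesis using mono_l by (auto simp: mono_def)
    next
      case False
      then have "s - X \<omega> \<le> s + c * z0"
        using \<open>s - X \<omega> \<le> s + c * Z \<omega>\<close> \<open>c \<ge> 0\<close> mult_left_mono[of "Z \<omega>" z0 c] by linarith
      then show ?thesis using mono_l by (auto simp: mono_def)
    qed
    moreover have "- \<bar>s\<bar> - c * Z \<omega> \<le> l (s - X \<omega>)"
      using l_ge[of "s - X \<omega>"] c[OF \<omega>] by linarith
    moreover have "0 \<le> c * Z \<omega>" using \<open>c \<ge> 0\<close> one_le_Z[OF \<omega>] by simp
    ultimately show "\<bar>l (s - X \<omega>)\<bar> \<le> K + \<bar>l (\<phi> (Z \<omega>))\<bar> + c * Z \<omega>"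
      unfolding K_def by linarith
  qed
qed

lemma rho_eq_INF_objective:
  assumes "Z_dominated X" shows "rho Q l X = (INF s. ereal (objective X s))"
  unfolding rho_def objective_def expected_loss_def
  by (simp add: eexp_ereal[OF integrable_loss[OF assms]])

lemma convex_objective:
  assumes X: "Z_dominated X" shows "convex_on UNIV (objective X)"
proof (rule convex_onI)
  fix t s1 s2 :: real assume t: "0 < t" "t < 1"
  have "expected_loss X ((1 - t) *\<^sub>R s1 + t *\<^sub>R s2)
      \<le> (\<integral>\<omega>. (1 - t) * l (s1 - X \<omega>) + t * l (s2 - X \<omega>) \<partial>Q)"
    unfolding expected_loss_def
  proof (rule integral_mono)
    fix \<omega>
    have "l ((1 - t) *\<^sub>R (s1 - X \<omega>) + t *\<^sub>R (s2 - X \<omega>)) \<le> (1 - t) * l (s1 - X \<omega>) + t * l (s2 - X \<omega>)"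
      using t by (intro convex_onD[OF convex_l]) auto
    then show "l ((1 - t) *\<^sub>R s1 + t *\<^sub>R s2 - X \<omega>) \<le> (1 - t) * l (s1 - X \<omega>) + t * l (s2 - X \<omega>)"
      by (simp add: algebra_simps)
  qed (use integrable_loss[OF X] in auto)
  also have "\<dots> = (1 - t) * expected_loss X s1 + t * expected_loss X s2"
    unfolding expected_loss_def using integrable_loss[OF X] by simp
  finally show "objective X ((1 - t) *\<^sub>R s1 + t *\<^sub>R s2) \<le> (1 - t) * objective X s1 + t * objective X s2"
    unfolding objective_def by (simp add: algebra_simps)
qed auto

lemma objective_coercive:
  assumes X: "Z_dominated X" shows "\<exists>a>0. \<exists>b. \<forall>s. a * \<bar>s\<bar> - b \<le> objective X s"
proof -
  have "convex_on UNIV (\<lambda>x. l x - x)"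
    by (intro convex_on_diff convex_l) (simp add: concave_on_ident)
  then obtain a b where "a > 0" and ab: "\<And>y. a * \<bar>y\<bar> - b \<le> l y - y"
    using convex_coercive_lower_bound[OF _ _ l_minus_id_top l_minus_id_bot] l_ge by force
  have iX: "integrable Q X" using Z_dominated_integrable[OF X refl integrable_Z] .
  have "a * \<bar>s\<bar> - (b + a * (\<integral>\<omega>. \<bar>X \<omega>\<bar> \<partial>Q) + \<bar>\<integral>\<omega>. X \<omega> \<partial>Q\<bar>) \<le> objective X s" for s
  proof -
    have "(\<integral>\<omega>. s - X \<omega> + a * \<bar>s\<bar> - a * \<bar>X \<omega>\<bar> - b \<partial>Q) \<le> expected_loss X s"
      unfolding expected_loss_def
    proof (rule integral_mono)
      fix \<omega>
      have "a * (\<bar>s\<bar> - \<bar>X \<omega>\<bar>) \<le> a * \<bar>s - X \<omega>\<bar>"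
        using \<open>a > 0\<close> by (intro mult_left_mono abs_triangle_ineq2) auto
      then show "s - X \<omega> + a * \<bar>s\<bar> - a * \<bar>X \<omega>\<bar> - b \<le> l (s - X \<omega>)"
        using ab[of "s - X \<omega>"] by (simp add: right_diff_distrib)
    qed (use iX integrable_loss[OF X] in auto)
    moreover have "(\<integral>\<omega>. s - X \<omega> + a * \<bar>s\<bar> - a * \<bar>X \<omega>\<bar> - b \<partial>Q)
        = s - (\<integral>\<omega>. X \<omega> \<partial>Q) + a * \<bar>s\<bar> - a * (\<integral>\<omega>. \<bar>X \<omega>\<bar> \<partial>Q) - b"
      using iX by (simp add: prob_space)
    ultimately show ?thesis unfolding objective_def by linarith
  qed
  then show ?thesis using \<open>a > 0\<close> by blast
qed

lemma objective_attains_min: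
  assumes X: "Z_dominated X" shows "\<exists>s0. \<forall>s. objective X s0 \<le> objective X s"
  using objective_coercive[OF X] convex_on_continuous[OF _ convex_objective[OF X]]
  by (metis continuous_coercive_attains_min open_UNIV)

lemma rho_eq_min_objective:
  assumes X: "Z_dominated X" and s0: "\<And>s. objective X s0 \<le> objective X s"
  shows "rho Q l X = ereal (objective X s0)"
  unfolding rho_eq_INF_objective[OF X]
  by (rule antisym) (auto intro!: INF_lower INF_greatest s0)

lemma rho_finite: "Z_dominated X \<Longrightarrow> \<bar>rho Q l X\<bar> \<noteq> \<infinity>"
  using objective_attains_min rho_eq_min_objective by force

lemma rho_mono:
  assumes X: "Z_dominated X" and Y: "Z_dominated Y" and le: "\<And>\<omega>. \<omega> \<in> space Q \<Longrightarrow> Y \<omega> \<le> X \<omega>"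
  shows "rho Q l X \<le> rho Q l Y"
  unfolding rho_eq_INF_objective[OF X] rho_eq_INF_objective[OF Y]
proof (intro INF_mono bexI)
  fix s
  have "expected_loss X s \<le> expected_loss Y s"
    unfolding expected_loss_def
    using integrable_loss[OF X] integrable_loss[OF Y] le mono_l
    by (intro integral_mono) (auto simp: mono_def)
  then show "ereal (objective X s) \<le> ereal (objective Y s)" by (simp add: objective_def)
qed simp

lemma rho_convex:
  assumes X: "Z_dominated X" and Y: "Z_dominated Y" and t: "0 \<le> t" "t \<le> 1"
  shows "real_of_ereal (rho Q l (\<lambda>\<omega>. t * X \<omega> + (1 - t) * Y \<omega>))
     \<le> t * real_of_ereal (rho Q l X) + (1 - t) * real_of_ereal (rho Q l Y)"
proof -
  define W where "W \<omega> = t * X \<omega> + (1 - t) * Y \<omega>" for \<omega>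
  have W: "Z_dominated W" unfolding W_def using Z_dominated_convex_comb[OF X Y t] .
  obtain sX sY where sX: "\<And>s. objective X sX \<le> objective X s" and sY: "\<And>s. objective Y sY \<le> objective Y s"
    using objective_attains_min[OF X] objective_attains_min[OF Y] by blast
  obtain sW where sW: "\<And>s. objective W sW \<le> objective W s"
    using objective_attains_min[OF W] by blast
  define s' where "s' = t * sX + (1 - t) * sY"
  have "expected_loss W s' \<le> (\<integral>\<omega>. t * l (sX - X \<omega>) + (1 - t) * l (sY - Y \<omega>) \<partial>Q)"
    unfolding expected_loss_def
  proof (rule integral_mono)
    fix \<omega>
    have "s' - W \<omega> = (1 - (1 - t)) *\<^sub>R (sX - X \<omega>) + (1 - t) *\<^sub>R (sY - Y \<omega>)"
      unfolding s'_def W_def by (simp add: algebra_simps)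
    moreover have "l ((1 - (1 - t)) *\<^sub>R (sX - X \<omega>) + (1 - t) *\<^sub>R (sY - Y \<omega>))
        \<le> (1 - (1 - t)) * l (sX - X \<omega>) + (1 - t) * l (sY - Y \<omega>)"
      using t by (intro convex_onD[OF convex_l]) auto
    ultimately show "l (s' - W \<omega>) \<le> t * l (sX - X \<omega>) + (1 - t) * l (sY - Y \<omega>)" by simp
  qed (use integrable_loss X Y W in auto)
  also have "\<dots> = t * expected_loss X sX + (1 - t) * expected_loss Y sY"
    unfolding expected_loss_def using integrable_loss X Y by simp
  finally have "objective W s' \<le> t * objective X sX + (1 - t) * objective Y sY"
    unfolding objective_def s'_def by (simp add: algebra_simps)
  then have "objective W sW \<le> t * objective X sX + (1 - t) * objective Y sY"
    using sW[of s'] by linarith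
  then show ?thesis
    using rho_eq_min_objective[OF X sX] rho_eq_min_objective[OF Y sY] rho_eq_min_objective[OF W sW]
    unfolding W_def by simp
qed

lemma objective_add_const: "objective (\<lambda>\<omega>. X \<omega> + m) s = objective X (s - m) - m"
  unfolding objective_def expected_loss_def by (simp add: algebra_simps)

lemma rho_add_const:
  assumes X: "Z_dominated X"
  shows "real_of_ereal (rho Q l (\<lambda>\<omega>. X \<omega> + m)) = real_of_ereal (rho Q l X) - m"
proof -
  obtain s0 where s0: "\<And>s. objective X s0 \<le> objective X s"
    using objective_attains_min[OF X] by blast
  have "objective (\<lambda>\<omega>. X \<omega> + m) (s0 + m) \<le> objective (\<lambda>\<omega>. X \<omega> + m) s" for s
    using s0[of "s - m"] by (simp add: objective_add_const)
  from rho_eq_min_objective[OF Z_dominated_add_const[OF X] this] rho_eq_min_objective[OF X s0]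
  show ?thesis by (simp add: objective_add_const)
qed

lemma rho_zero: "rho Q l (\<lambda>\<omega>. 0) = 0"
proof -
  have "Z_dominated (\<lambda>\<omega>. 0)" unfolding Z_dominated_def by auto
  moreover obtain x0 where "l x0 = x0" using l_fixed_point by blast
  moreover have "objective (\<lambda>\<omega>. 0) s = l s - s" for s
    unfolding objective_def expected_loss_def by (simp add: prob_space)
  ultimately show ?thesis
    using rho_eq_min_objective[of "\<lambda>\<omega>. 0" x0] l_ge by (simp add: zero_ereal_def)
qed

lemma convex_risk_measure_rho:
  "convex_risk_measure \<Omega> (BZ \<Omega> Z) (\<lambda>X. real_of_ereal (rho Q l X))"
  unfolding convex_risk_measure_def
proof (intro conjI ballI allI impI)
  fix X Y assume "X \<in> BZ \<Omega> Z" "Y \<in> BZ \<Omega> Z" "\<forall>\<omega>\<in>\<Omega>. Y \<omega> \<le> X \<omega>"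
  then have "rho Q l X \<le> rho Q l Y" and "\<bar>rho Q l X\<bar> \<noteq> \<infinity>" "\<bar>rho Q l Y\<bar> \<noteq> \<infinity>"
    using rho_mono[of X Y] rho_finite space_Q by (auto simp: BZ_iff_Z_dominated)
  then show "real_of_ereal (rho Q l X) \<le> real_of_ereal (rho Q l Y)"
    by (cases "rho Q l X"; cases "rho Q l Y") auto
qed (auto simp: BZ_iff_Z_dominated rho_convex rho_add_const)

lemmas borel_measurable_deriv_l[measurable] =
  borel_measurable_right_deriv[OF convex_l] borel_measurable_left_deriv[OF convex_l]

lemma integral_slope_loss:
  assumes "Z_dominated X"
  shows "(\<integral>\<omega>. slope l (a - X \<omega>) (b - X \<omega>) \<partial>Q) = slope (expected_loss X) a b"
  unfolding slope_def expected_loss_def using integrable_loss[OF assms] by simp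

lemma integrable_unit_slope_loss:
  assumes "Z_dominated X" shows "integrable Q (\<lambda>\<omega>. slope l (s - X \<omega>) (s + 1 - X \<omega>))"
  unfolding slope_def using integrable_loss[OF assms] by simp

lemma right_deriv_loss:
  assumes X: "Z_dominated X"
  shows "integrable Q (\<lambda>\<omega>. right_deriv l (s - X \<omega>))"
    and "(\<lambda>n. slope (expected_loss X) s (s + 1 / Suc n)) \<longlonglongrightarrow> (\<integral>\<omega>. right_deriv l (s - X \<omega>) \<partial>Q)"
proof -
  have [measurable]: "X \<in> borel_measurable Q" using X unfolding Z_dominated_def by simp
  define u where "u n \<omega> = slope l (s - X \<omega>) (s + 1 / Suc n - X \<omega>)" for n \<omega>
  have u: "(\<lambda>n. u n \<omega>) \<longlonglongrightarrow> right_deriv l (s - X \<omega>)" for \<omega>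
    using right_deriv_LIMSEQ[OF convex_l, of "s - X \<omega>"] unfolding u_def by (simp add: algebra_simps)
  have "norm (u n \<omega>) \<le> slope l (s - X \<omega>) (s + 1 - X \<omega>)" for n \<omega>
    using mono_slope_nonneg[OF mono_l] convex_on_slope_mono[OF convex_l]
    unfolding u_def by (simp add: frac_le)
  then have bound: "AE \<omega> in Q. norm (u n \<omega>) \<le> slope l (s - X \<omega>) (s + 1 - X \<omega>)" for n
    by simp
  have lim: "AE \<omega> in Q. (\<lambda>n. u n \<omega>) \<longlonglongrightarrow> right_deriv l (s - X \<omega>)" using u by simp
  have meas: "u n \<in> borel_measurable Q" for n unfolding u_def slope_def by measurable
  note dc = integrable_dominated_convergence integral_dominated_convergence
  note dc = dc[OF _ meas integrable_unit_slope_loss[OF X] lim bound]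
  show "integrable Q (\<lambda>\<omega>. right_deriv l (s - X \<omega>))" by (rule dc(1)) measurable
  show "(\<lambda>n. slope (expected_loss X) s (s + 1 / Suc n)) \<longlonglongrightarrow> (\<integral>\<omega>. right_deriv l (s - X \<omega>) \<partial>Q)"
    using dc(2) unfolding u_def integral_slope_loss[OF X] by measurable
qed

lemma left_deriv_loss:
  assumes X: "Z_dominated X"
  shows "integrable Q (\<lambda>\<omega>. left_deriv l (s - X \<omega>))"
    and "(\<lambda>n. slope (expected_loss X) (s - 1 / Suc n) s) \<longlonglongrightarrow> (\<integral>\<omega>. left_deriv l (s - X \<omega>) \<partial>Q)"
proof -
  have [measurable]: "X \<in> borel_measurable Q" using X unfolding Z_dominated_def by simp
  define u where "u n \<omega> = slope l (s - 1 / Suc n - X \<omega>) (s - X \<omega>)" for n \<omega>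
  have u: "(\<lambda>n. u n \<omega>) \<longlonglongrightarrow> left_deriv l (s - X \<omega>)" for \<omega>
    using left_deriv_LIMSEQ[OF convex_l, of "s - X \<omega>"] unfolding u_def by (simp add: algebra_simps)
  have "norm (u n \<omega>) \<le> slope l (s - X \<omega>) (s + 1 - X \<omega>)" for n \<omega>
    using mono_slope_nonneg[OF mono_l] convex_on_slope_mono[OF convex_l]
    unfolding u_def by simp
  then have bound: "AE \<omega> in Q. norm (u n \<omega>) \<le> slope l (s - X \<omega>) (s + 1 - X \<omega>)" for n
    by simp
  have lim: "AE \<omega> in Q. (\<lambda>n. u n \<omega>) \<longlonglongrightarrow> left_deriv l (s - X \<omega>)" using u by simp
  have meas: "u n \<in> borel_measurable Q" for n unfolding u_def slope_def by measurable
  note dc = integrable_dominated_convergence integral_dominated_convergence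
  note dc = dc[OF _ meas integrable_unit_slope_loss[OF X] lim bound]
  show "integrable Q (\<lambda>\<omega>. left_deriv l (s - X \<omega>))" by (rule dc(1)) measurable
  show "(\<lambda>n. slope (expected_loss X) (s - 1 / Suc n) s) \<longlonglongrightarrow> (\<integral>\<omega>. left_deriv l (s - X \<omega>) \<partial>Q)"
    using dc(2) unfolding u_def integral_slope_loss[OF X] by measurable
qed

lemma
  assumes X: "Z_dominated X" and s0: "\<And>s. objective X s0 \<le> objective X s"
  shows one_le_integral_right_deriv: "1 \<le> (\<integral>\<omega>. right_deriv l (s0 - X \<omega>) \<partial>Q)"
    and integral_left_deriv_le_one: "(\<integral>\<omega>. left_deriv l (s0 - X \<omega>) \<partial>Q) \<le> 1"
proof -
  have "1 \<le> slope (expected_loss X) s0 (s0 + h)" if "0 < h" for h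
    using s0[of "s0 + h"] that by (simp add: slope_ge_iff objective_def)
  then show "1 \<le> (\<integral>\<omega>. right_deriv l (s0 - X \<omega>) \<partial>Q)"
    by (intro tendsto_lowerbound[OF right_deriv_loss(2)[OF X]] always_eventually) auto
  have "slope (expected_loss X) (s0 - h) s0 \<le> 1" if "0 < h" for h
    using s0[of "s0 - h"] that by (simp add: slope_le_iff objective_def)
  then show "(\<integral>\<omega>. left_deriv l (s0 - X \<omega>) \<partial>Q) \<le> 1"
    by (intro tendsto_upperbound[OF left_deriv_loss(2)[OF X]] always_eventually) auto
qed

lemma subgradient_density_exists:
  assumes X: "Z_dominated X" and s0: "\<And>s. objective X s0 \<le> objective X s"
  obtains D where "D \<in> borel_measurable Q" "\<And>\<omega>. 0 \<le> D \<omega>" "integrable Q D" "(\<integral>\<omega>. D \<omega> \<partial>Q) = 1"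
    "\<And>\<omega>. is_subgradient l (s0 - X \<omega>) (D \<omega>)"
proof -
  have [measurable]: "X \<in> borel_measurable Q" using X unfolding Z_dominated_def by simp
  define Ir where "Ir = (\<integral>\<omega>. right_deriv l (s0 - X \<omega>) \<partial>Q)"
  define Il where "Il = (\<integral>\<omega>. left_deriv l (s0 - X \<omega>) \<partial>Q)"
  have "Il \<le> 1" "1 \<le> Ir"
    using one_le_integral_right_deriv[OF X s0] integral_left_deriv_le_one[OF X s0]
    unfolding Ir_def Il_def by auto
  then obtain t where t: "0 \<le> t" "t \<le> 1" "t * Il + (1 - t) * Ir = 1"
  proof (cases "Il = Ir")
    case False
    then have "0 < Ir - Il" using \<open>Il \<le> 1\<close> \<open>1 \<le> Ir\<close> by simp
    define t where "t = (Ir - 1) / (Ir - Il)"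
    have "t * (Ir - Il) = Ir - 1" using \<open>0 < Ir - Il\<close> by (simp add: t_def)
    moreover have "t * Il + (1 - t) * Ir = Ir - t * (Ir - Il)" by (simp add: algebra_simps)
    moreover have "0 \<le> t" "t \<le> 1" using \<open>0 < Ir - Il\<close> \<open>Il \<le> 1\<close> \<open>1 \<le> Ir\<close> by (simp_all add: t_def)
    ultimately show ?thesis using that by simp
  qed (rule that[of 0]; use \<open>Il \<le> 1\<close> \<open>1 \<le> Ir\<close> in simp)
  define D where "D \<omega> = t * left_deriv l (s0 - X \<omega>) + (1 - t) * right_deriv l (s0 - X \<omega>)" for \<omega>
  show ?thesis
  proof (rule that)
    show "D \<in> borel_measurable Q" unfolding D_def by measurable
    show "integrable Q D"
      unfolding D_def using left_deriv_loss(1)[OF X] right_deriv_loss(1)[OF X] by simp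
    then show "(\<integral>\<omega>. D \<omega> \<partial>Q) = 1"
      unfolding D_def using left_deriv_loss(1)[OF X] right_deriv_loss(1)[OF X] t(3)
      by (simp add: Il_def Ir_def)
    fix \<omega>
    have le: "left_deriv l (s0 - X \<omega>) \<le> right_deriv l (s0 - X \<omega>)"
      by (rule left_deriv_le_right_deriv[OF convex_l])
    have "D \<omega> - left_deriv l (s0 - X \<omega>) = (1 - t) * (right_deriv l (s0 - X \<omega>) - left_deriv l (s0 - X \<omega>))"
      unfolding D_def by (simp add: algebra_simps)
    moreover have "0 \<le> (1 - t) * (right_deriv l (s0 - X \<omega>) - left_deriv l (s0 - X \<omega>))"
      using le t by (intro mult_nonneg_nonneg) auto
    ultimately have "left_deriv l (s0 - X \<omega>) \<le> D \<omega>" by linarith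
    moreover have "D \<omega> \<le> right_deriv l (s0 - X \<omega>)"
      unfolding D_def using le t by (intro convex_bound_le) auto
    ultimately show "is_subgradient l (s0 - X \<omega>) (D \<omega>)"
      by (rule is_subgradient_between[OF convex_l])
    show "0 \<le> D \<omega>" using \<open>left_deriv l (s0 - X \<omega>) \<le> D \<omega>\<close> left_deriv_nonneg[OF convex_l mono_l] by (rule order_trans[rotated])
  qed
qed

lemma subgradient_density_integrable_Z:
  assumes X: "Z_dominated X" and [measurable]: "D \<in> borel_measurable Q"
    and D_nonneg: "\<And>\<omega>. 0 \<le> D \<omega>" and "integrable Q D"
    and D_subgradient: "\<And>\<omega>. is_subgradient l (s0 - X \<omega>) (D \<omega>)"
  shows "integrable Q (\<lambda>\<omega>. D \<omega> * Z \<omega>)"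
proof -
  obtain c where [measurable]: "X \<in> borel_measurable Q"
    and c: "\<And>\<omega>. \<omega> \<in> space Q \<Longrightarrow> \<bar>X \<omega>\<bar> \<le> c * Z \<omega>"
    using X unfolding Z_dominated_def by auto
  obtain z0 where "1 \<le> z0" and z0: "\<And>x. z0 \<le> x \<Longrightarrow> (\<bar>s0\<bar> + c + 1) * x \<le> \<phi> x"
    using phi_dominates_linear by blast
  show ?thesis
  proof (rule integrable_abs_bounded)
  show "integrable Q (\<lambda>\<omega>. z0 * D \<omega> + \<bar>l (\<phi> (Z \<omega>))\<bar> + \<bar>l (s0 - X \<omega>)\<bar>)"
    using \<open>integrable Q D\<close> integrable_l_phi_Z integrable_loss[OF X] by auto
  show "(\<lambda>\<omega>. D \<omega> * Z \<omega>) \<in> borel_measurable Q" by measurable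
  fix \<omega> assume \<omega>: "\<omega> \<in> space Q"
  have "D \<omega> * Z \<omega> \<le> z0 * D \<omega> + \<bar>l (\<phi> (Z \<omega>))\<bar> + \<bar>l (s0 - X \<omega>)\<bar>"
  proof (cases "z0 \<le> Z \<omega>")
    case True
    \<comment> \<open>where \<open>Z\<close> is large, \<open>\<phi>(Z)\<close> exceeds \<open>s0 - X\<close> by at least \<open>Z\<close>\<close>
    have "\<bar>s0\<bar> \<le> \<bar>s0\<bar> * Z \<omega>" using one_le_Z[OF \<omega>] by (simp add: mult_le_cancel_left1)
    then have "Z \<omega> \<le> \<phi> (Z \<omega>) - (s0 - X \<omega>)"
      using z0[OF True] c[OF \<omega>] by (simp add: distrib_right)
    then have "D \<omega> * Z \<omega> \<le> D \<omega> * (\<phi> (Z \<omega>) - (s0 - X \<omega>))"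
      using D_nonneg by (rule mult_left_mono)
    also have "\<dots> \<le> l (\<phi> (Z \<omega>)) - l (s0 - X \<omega>)"
      using D_subgradient[of \<omega>, unfolded is_subgradient_def, rule_format, of "\<phi> (Z \<omega>)"]
      by linarith
    finally show ?thesis using D_nonneg[of \<omega>] \<open>1 \<le> z0\<close> mult_nonneg_nonneg[of z0 "D \<omega>"] by linarith
  next
    case False
    then show ?thesis using D_nonneg[of \<omega>] mult_left_mono[of "Z \<omega>" z0 "D \<omega>"] by (simp add: mult.commute)
  qed
  then show "\<bar>D \<omega> * Z \<omega>\<bar> \<le> z0 * D \<omega> + \<bar>l (\<phi> (Z \<omega>))\<bar> + \<bar>l (s0 - X \<omega>)\<bar>"
    using D_nonneg[of \<omega>] one_le_Z[OF \<omega>] by simp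
  qed
qed

lemma rho_attained:
  assumes X: "Z_dominated X"
  obtains P where "P \<in> PZ \<Omega> Z" "absolutely_continuous Q P"
    "rho Q l X = ereal (\<integral>\<omega>. - X \<omega> \<partial>P) - divergence Q l P"
proof -
  have [measurable]: "X \<in> borel_measurable Q" using X unfolding Z_dominated_def by simp
  obtain s0 where s0: "\<And>s. objective X s0 \<le> objective X s"
    using objective_attains_min[OF X] by blast
  obtain D where [measurable]: "D \<in> borel_measurable Q" and D_nonneg: "\<And>\<omega>. 0 \<le> D \<omega>"
    and D_int: "integrable Q D" and D_1: "(\<integral>\<omega>. D \<omega> \<partial>Q) = 1"
    and D_subgradient: "\<And>\<omega>. is_subgradient l (s0 - X \<omega>) (D \<omega>)"
    using subgradient_density_exists[OF X s0] by blast
  have DZ: "integrable Q (\<lambda>\<omega>. D \<omega> * Z \<omega>)"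
    using subgradient_density_integrable_Z[OF X _ D_nonneg D_int D_subgradient] by simp
  define P where "P = density Q (\<lambda>\<omega>. ennreal (D \<omega>))"
  have sets_P: "sets P = sets Q" unfolding P_def by simp
  have PZ: "integrable P Z"
    unfolding P_def using DZ D_nonneg by (simp add: integrable_density mult.commute)
  have XD: "integrable Q (\<lambda>\<omega>. X \<omega> * D \<omega>)"
    using Z_dominated_integrable[OF X sets_P PZ] D_nonneg
    by (simp add: P_def integrable_density mult.commute)
  have "emeasure P (space P) = 1"
  proof -
    have "emeasure P (space P) = (\<integral>\<^sup>+\<omega>. ennreal (D \<omega>) * indicator (space Q) \<omega> \<partial>Q)"
      unfolding P_def by (subst emeasure_density) auto
    also have "\<dots> = (\<integral>\<^sup>+\<omega>. ennreal (D \<omega>) \<partial>Q)" by (intro nn_integral_cong) auto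
    also have "\<dots> = 1" using D_int D_nonneg D_1 by (simp add: nn_integral_eq_integral)
    finally show ?thesis .
  qed
  then have "P \<in> PZ \<Omega> Z"
    unfolding PZ_iff using sets_P PZ by (auto intro: prob_spaceI)
  moreover have "absolutely_continuous Q P"
    unfolding P_def by (intro absolutely_continuousI_density) auto
  moreover have "divergence Q l P = ereal (s0 - (\<integral>\<omega>. X \<omega> * D \<omega> \<partial>Q) - expected_loss X s0)"
  proof -
    have "AE \<omega> in Q. ennreal (D \<omega>) = RN_deriv Q P \<omega>"
      unfolding P_def by (rule RN_deriv_unique) auto
    then have "AE \<omega> in Q. conj_fn l (enn2real (RN_deriv Q P \<omega>)) = ereal ((s0 - X \<omega>) * D \<omega> - l (s0 - X \<omega>))"
    proof eventually_elim
      case (elim \<omega>)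
      then have "enn2real (RN_deriv Q P \<omega>) = D \<omega>" using D_nonneg[of \<omega>] by (metis enn2real_ennreal)
      then show ?case using conj_fn_subgradient[OF D_subgradient[of \<omega>]] by simp
    qed
    then have "divergence Q l P = eexp Q (\<lambda>\<omega>. ereal ((s0 - X \<omega>) * D \<omega> - l (s0 - X \<omega>)))"
      unfolding divergence_def by (rule eexp_cong_AE)
    also have "\<dots> = ereal (\<integral>\<omega>. s0 * D \<omega> - X \<omega> * D \<omega> - l (s0 - X \<omega>) \<partial>Q)"
      using D_int XD integrable_loss[OF X] by (subst eexp_ereal) (auto simp: algebra_simps)
    also have "\<dots> = ereal (s0 - (\<integral>\<omega>. X \<omega> * D \<omega> \<partial>Q) - expected_loss X s0)"
      using D_int XD integrable_loss[OF X] D_1 by (simp add: expected_loss_def)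
    finally show ?thesis .
  qed
  moreover have "(\<integral>\<omega>. - X \<omega> \<partial>P) = - (\<integral>\<omega>. X \<omega> * D \<omega> \<partial>Q)"
    unfolding P_def using D_nonneg by (subst integral_density) (auto simp: mult_ac)
  ultimately show ?thesis
    using that rho_eq_min_objective[OF X s0] unfolding objective_def by simp
qed

lemma RN_density:
  assumes "prob_space P" and sets_P: "sets P = sets Q" and ac: "absolutely_continuous Q P"
  shows "integrable Q (\<lambda>\<omega>. enn2real (RN_deriv Q P \<omega>))"
    and "(\<integral>\<omega>. enn2real (RN_deriv Q P \<omega>) \<partial>Q) = 1"
proof -
  interpret P: prob_space P by fact
  note RN = RN_deriv_integrable[OF P.sigma_finite_measure_axioms ac sets_P]
    RN_deriv_integral[OF P.sigma_finite_measure_axioms ac sets_P]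
  show "integrable Q (\<lambda>\<omega>. enn2real (RN_deriv Q P \<omega>))"
    using RN(1)[of "\<lambda>_. 1"] by simp
  show "(\<integral>\<omega>. enn2real (RN_deriv Q P \<omega>) \<partial>Q) = 1"
    using RN(2)[of "\<lambda>_. 1"] P.prob_space by simp
qed

lemma rho_ge_dual:
  assumes X: "Z_dominated X" and P: "P \<in> PZ \<Omega> Z" and ac: "absolutely_continuous Q P"
  shows "ereal (\<integral>\<omega>. - X \<omega> \<partial>P) - divergence Q l P \<le> rho Q l X"
proof -
  interpret P: prob_space P using P by (simp add: PZ_iff)
  have sets_P: "sets P = sets Q" and "integrable P Z" using P by (auto simp: PZ_iff)
  have [measurable]: "X \<in> borel_measurable Q" using X unfolding Z_dominated_def by simp
  define d where "d \<omega> = enn2real (RN_deriv Q P \<omega>)" for \<omega>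
  have d: "integrable Q d" "(\<integral>\<omega>. d \<omega> \<partial>Q) = 1"
    using RN_density[OF P.prob_space_axioms sets_P ac] unfolding d_def by auto
  note RN = RN_deriv_integrable[OF P.sigma_finite_measure_axioms ac sets_P]
    RN_deriv_integral[OF P.sigma_finite_measure_axioms ac sets_P]
  have dX: "integrable Q (\<lambda>\<omega>. d \<omega> * X \<omega>)"
    using RN(1) Z_dominated_integrable[OF X sets_P \<open>integrable P Z\<close>] unfolding d_def by simp
  have XP: "(\<integral>\<omega>. - X \<omega> \<partial>P) = - (\<integral>\<omega>. d \<omega> * X \<omega> \<partial>Q)"
    using RN(2)[of X] unfolding d_def by simp
  have "ereal (\<integral>\<omega>. - X \<omega> \<partial>P) - divergence Q l P \<le> ereal (objective X s)" for s
  proof -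
    have int: "integrable Q (\<lambda>\<omega>. s * d \<omega> - d \<omega> * X \<omega> - l (s - X \<omega>))"
      using d dX integrable_loss[OF X] by auto
    have "ereal (s - (\<integral>\<omega>. d \<omega> * X \<omega> \<partial>Q) - expected_loss X s)
        = ereal (\<integral>\<omega>. (s - X \<omega>) * d \<omega> - l (s - X \<omega>) \<partial>Q)"
      using d dX integrable_loss[OF X] by (simp add: expected_loss_def algebra_simps)
    also have "\<dots> \<le> divergence Q l P"
      unfolding divergence_def d_def[symmetric]
      by (rule eexp_conj_fn_ge) (use int in \<open>simp add: algebra_simps\<close>)
    finally show ?thesis
      unfolding XP objective_def by (cases "divergence Q l P") auto
  qed
  then show ?thesis unfolding rho_eq_INF_objective[OF X] by (rule INF_greatest)
qed

lemma divergence_nonneg: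
  assumes "prob_space P" "sets P = sets Q" "absolutely_continuous Q P"
  shows "0 \<le> divergence Q l P"
proof -
  obtain x0 where "l x0 = x0" using l_fixed_point by blast
  note d = RN_density[OF assms]
  have "ereal 0 = ereal (\<integral>\<omega>. x0 * enn2real (RN_deriv Q P \<omega>) - l x0 \<partial>Q)"
    using d \<open>l x0 = x0\<close> by (simp add: prob_space)
  also have "\<dots> \<le> divergence Q l P"
    unfolding divergence_def by (rule eexp_conj_fn_ge) (use d in simp)
  finally show ?thesis by (simp add: zero_ereal_def)
qed

lemma divergence_self: "divergence Q l Q = 0"
proof -
  have "AE \<omega> in Q. (\<lambda>_. 1) \<omega> = RN_deriv Q Q \<omega>"
    by (rule RN_deriv_unique) (auto simp: density_1)
  then have "AE \<omega> in Q. conj_fn l (enn2real (RN_deriv Q Q \<omega>)) = ereal 0"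
    by eventually_elim (metis conj_l_one enn2real_1 zero_ereal_def)
  then have "divergence Q l Q = eexp Q (\<lambda>\<omega>. ereal 0)"
    unfolding divergence_def by (rule eexp_cong_AE)
  then show ?thesis using eexp_ereal[of Q "\<lambda>_. 0"] by simp
qed

lemma divergence_ge_growth:
  assumes "prob_space P" and sets_P: "sets P = sets Q" and ac: "absolutely_continuous Q P"
  shows "eexp P (\<lambda>\<omega>. ereal (\<phi> (Z \<omega>) - C)) \<le> divergence Q l P"
proof -
  interpret P: prob_space P by fact
  note RN = RN_deriv_integrable[OF P.sigma_finite_measure_axioms ac sets_P]
    RN_deriv_integral[OF P.sigma_finite_measure_axioms ac sets_P]
  define d where "d \<omega> = enn2real (RN_deriv Q P \<omega>)" for \<omega>
  have d: "integrable Q d" "(\<integral>\<omega>. d \<omega> \<partial>Q) = 1"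
    using RN_density[OF assms] unfolding d_def by auto
  have [measurable]: "d \<in> borel_measurable Q" using d by auto
  define u where "u \<omega> = \<phi> (Z \<omega>) - C" for \<omega>
  have [measurable]: "u \<in> borel_measurable Q" unfolding u_def by measurable
  then have u_P: "u \<in> borel_measurable P" by (simp only: measurable_cong_sets[OF sets_P refl])
  have u_ge: "\<phi> 1 - C \<le> u \<omega>" if "\<omega> \<in> space Q" for \<omega>
    using mono_phi one_le_Z[OF that] unfolding u_def mono_on_def by auto
  define v where "v \<omega> = C * d \<omega> - l (\<phi> (Z \<omega>))" for \<omega>
  have v: "integrable Q v" "0 \<le> (\<integral>\<omega>. v \<omega> \<partial>Q)"
    unfolding v_def using d integrable_l_phi_Z integral_l_phi_Z_le by auto
  have Fenchel: "ereal (d \<omega> * u \<omega> + v \<omega>) \<le> conj_fn l (d \<omega>)" for \<omega>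
    using conj_fn_ge[of "\<phi> (Z \<omega>)" "d \<omega>" l] unfolding u_def v_def by (simp add: algebra_simps)
  show ?thesis
  proof (cases "integrable Q (\<lambda>\<omega>. d \<omega> * u \<omega>)")
    case True
    then have "integrable P u" using RN(1) unfolding d_def by simp
    then have "eexp P (\<lambda>\<omega>. ereal (u \<omega>)) = ereal (\<integral>\<omega>. d \<omega> * u \<omega> \<partial>Q)"
      using RN(2)[of u] unfolding d_def by (simp add: eexp_ereal)
    also have "\<dots> \<le> ereal (\<integral>\<omega>. d \<omega> * u \<omega> + v \<omega> \<partial>Q)" using True v by simp
    also have "\<dots> = eexp Q (\<lambda>\<omega>. ereal (d \<omega> * u \<omega> + v \<omega>))" using True v by (simp add: eexp_ereal)
    also have "\<dots> \<le> divergence Q l P" unfolding divergence_def d_def[symmetric] by (intro eexp_mono Fenchel)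
    finally show ?thesis unfolding u_def .
  next
    case False
    then have "\<not> integrable P u" using RN(1) unfolding d_def by simp
    then have "eexp P (\<lambda>\<omega>. ereal (u \<omega>)) = \<infinity>"
      using u_ge sets_eq_imp_space_eq[OF sets_P] by (intro eexp_eq_PInf[OF u_P P.integrable_const]) auto
    moreover have "eexp Q (\<lambda>\<omega>. ereal (d \<omega> * u \<omega> + v \<omega>)) = \<infinity>"
    proof (rule eexp_eq_PInf)
      show "integrable Q (\<lambda>\<omega>. d \<omega> * (\<phi> 1 - C) + v \<omega>)" using d v by auto
      show "d \<omega> * (\<phi> 1 - C) + v \<omega> \<le> d \<omega> * u \<omega> + v \<omega>" if "\<omega> \<in> space Q" for \<omega>
        using u_ge[OF that] mult_left_mono[of "\<phi> 1 - C" "u \<omega>" "d \<omega>"] by (simp add: d_def)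
      show "\<not> integrable Q (\<lambda>\<omega>. d \<omega> * u \<omega> + v \<omega>)"
        using False Bochner_Integration.integrable_diff[OF _ v(1), of "\<lambda>\<omega>. d \<omega> * u \<omega> + v \<omega>"] by auto
    qed (unfold v_def, measurable)
    moreover have "eexp Q (\<lambda>\<omega>. ereal (d \<omega> * u \<omega> + v \<omega>)) \<le> divergence Q l P"
      unfolding divergence_def d_def[symmetric] by (intro eexp_mono Fenchel)
    ultimately show ?thesis unfolding u_def by (simp add: top_unique)
  qed
qed

lemma rho_dual_representation:
  assumes "X \<in> BZ \<Omega> Z"
  shows "\<exists>P\<in>PZ \<Omega> Z. absolutely_continuous Q P
           \<and> rho Q l X = ereal (\<integral>\<omega>. - X \<omega> \<partial>P) - divergence Q l P
           \<and> (\<forall>P'\<in>PZ \<Omega> Z. absolutely_continuous Q P' \<longrightarrow>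
                ereal (\<integral>\<omega>. - X \<omega> \<partial>P') - divergence Q l P' \<le> rho Q l X)"
  using assms rho_attained rho_ge_dual unfolding BZ_iff_Z_dominated by metis

end

section \<open>Families of loss functions\<close>

definition penalty :: "'a measure set \<Rightarrow> ('a measure \<Rightarrow> real \<Rightarrow> real) \<Rightarrow> 'a measure \<Rightarrow> ereal" where
  "penalty \<Q> l P = (INF Q\<in>{Q\<in>\<Q>. absolutely_continuous Q P}. divergence Q (l Q) P)"

locale loss_family =
  fixes \<Omega> :: "'a::topological_space set" and Z :: "'a \<Rightarrow> real" and \<Q> :: "'a measure set"
    and l :: "'a measure \<Rightarrow> real \<Rightarrow> real" and \<phi> :: "real \<Rightarrow> real" and C :: real
  assumes family_nonempty: "\<Q> \<noteq> {}"
    and loss_risk_member: "\<And>Q. Q \<in> \<Q> \<Longrightarrow> loss_risk Q \<Omega> Z (l Q) \<phi> C"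
begin

lemma risk_measure_properties:
  assumes "Q \<in> \<Q>"
  shows "(\<forall>X\<in>BZ \<Omega> Z. \<bar>rho Q (l Q) X\<bar> \<noteq> \<infinity>)
      \<and> convex_risk_measure \<Omega> (BZ \<Omega> Z) (\<lambda>X. real_of_ereal (rho Q (l Q) X))
      \<and> rho Q (l Q) (\<lambda>\<omega>. 0) = 0
      \<and> (\<forall>X\<in>BZ \<Omega> Z. \<exists>P\<in>PZ \<Omega> Z. absolutely_continuous Q P
           \<and> rho Q (l Q) X = ereal (\<integral>\<omega>. - X \<omega> \<partial>P) - divergence Q (l Q) P
           \<and> (\<forall>P'\<in>PZ \<Omega> Z. absolutely_continuous Q P' \<longrightarrow>
                ereal (\<integral>\<omega>. - X \<omega> \<partial>P') - divergence Q (l Q) P' \<le> rho Q (l Q) X))"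
proof -
  interpret loss_risk Q \<Omega> Z "l Q" \<phi> C using assms by (rule loss_risk_member)
  show ?thesis using rho_finite convex_risk_measure_rho rho_zero rho_dual_representation
    by (simp add: BZ_iff_Z_dominated)
qed

lemma penalty_nonneg:
  assumes "P \<in> PZ \<Omega> Z" shows "0 \<le> penalty \<Q> l P"
  unfolding penalty_def
proof (rule INF_greatest)
  fix Q assume Q: "Q \<in> {Q \<in> \<Q>. absolutely_continuous Q P}"
  then interpret loss_risk Q \<Omega> Z "l Q" \<phi> C by (simp add: loss_risk_member)
  show "0 \<le> divergence Q (l Q) P" using assms Q by (intro divergence_nonneg) (auto simp: PZ_iff)
qed

lemma INF_penalty: "(INF P\<in>PZ \<Omega> Z. penalty \<Q> l P) = 0"
proof (rule antisym)
  obtain Q where Q: "Q \<in> \<Q>" using family_nonempty by blast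
  then interpret loss_risk Q \<Omega> Z "l Q" \<phi> C by (rule loss_risk_member)
  have "penalty \<Q> l Q \<le> divergence Q (l Q) Q"
    unfolding penalty_def using Q by (intro INF_lower) (simp add: absolutely_continuous_def)
  then show "(INF P\<in>PZ \<Omega> Z. penalty \<Q> l P) \<le> 0"
    using Q_in_PZ divergence_self by (metis INF_lower2)
  show "0 \<le> (INF P\<in>PZ \<Omega> Z. penalty \<Q> l P)" by (intro INF_greatest penalty_nonneg)
qed

lemma penalty_ge_growth:
  assumes "P \<in> PZ \<Omega> Z" shows "eexp P (\<lambda>\<omega>. ereal (\<phi> (Z \<omega>) - C)) \<le> penalty \<Q> l P"
  unfolding penalty_def
proof (rule INF_greatest)
  fix Q assume Q: "Q \<in> {Q \<in> \<Q>. absolutely_continuous Q P}"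
  then interpret loss_risk Q \<Omega> Z "l Q" \<phi> C by (simp add: loss_risk_member)
  show "eexp P (\<lambda>\<omega>. ereal (\<phi> (Z \<omega>) - C)) \<le> divergence Q (l Q) P"
    using assms Q by (intro divergence_ge_growth) (auto simp: PZ_iff)
qed

lemma acceptance_set_eq:
  "(\<Inter>Q\<in>\<Q>. {X\<in>BZ \<Omega> Z. rho Q (l Q) X \<le> 0})
     = {X\<in>BZ \<Omega> Z. \<forall>P\<in>PZ \<Omega> Z. 0 \<le> ereal (\<integral>\<omega>. X \<omega> \<partial>P) + penalty \<Q> l P}"
proof (intro set_eqI iffI)
  fix X assume X: "X \<in> (\<Inter>Q\<in>\<Q>. {X\<in>BZ \<Omega> Z. rho Q (l Q) X \<le> 0})"
  then have "X \<in> BZ \<Omega> Z" using family_nonempty by auto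
  moreover have "0 \<le> ereal (\<integral>\<omega>. X \<omega> \<partial>P) + penalty \<Q> l P" if P: "P \<in> PZ \<Omega> Z" for P
  proof -
    have "ereal (- (\<integral>\<omega>. X \<omega> \<partial>P)) \<le> penalty \<Q> l P"
      unfolding penalty_def
    proof (rule INF_greatest)
      fix Q assume Q: "Q \<in> {Q \<in> \<Q>. absolutely_continuous Q P}"
      then interpret loss_risk Q \<Omega> Z "l Q" \<phi> C by (simp add: loss_risk_member)
      have "ereal (\<integral>\<omega>. - X \<omega> \<partial>P) - divergence Q (l Q) P \<le> rho Q (l Q) X"
        using rho_ge_dual \<open>X \<in> BZ \<Omega> Z\<close> P Q by (simp add: BZ_iff_Z_dominated)
      also have "\<dots> \<le> 0" using X Q by auto
      finally show "ereal (- (\<integral>\<omega>. X \<omega> \<partial>P)) \<le> divergence Q (l Q) P"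
        by (cases "divergence Q (l Q) P") auto
    qed
    then show ?thesis by (cases "penalty \<Q> l P") auto
  qed
  ultimately show "X \<in> {X\<in>BZ \<Omega> Z. \<forall>P\<in>PZ \<Omega> Z. 0 \<le> ereal (\<integral>\<omega>. X \<omega> \<partial>P) + penalty \<Q> l P}"
    by blast
next
  fix X assume X: "X \<in> {X\<in>BZ \<Omega> Z. \<forall>P\<in>PZ \<Omega> Z. 0 \<le> ereal (\<integral>\<omega>. X \<omega> \<partial>P) + penalty \<Q> l P}"
  have "rho Q (l Q) X \<le> 0" if Q: "Q \<in> \<Q>" for Q
  proof -
    interpret loss_risk Q \<Omega> Z "l Q" \<phi> C using Q by (rule loss_risk_member)
    obtain P where P: "P \<in> PZ \<Omega> Z" "absolutely_continuous Q P"
      and rho: "rho Q (l Q) X = ereal (\<integral>\<omega>. - X \<omega> \<partial>P) - divergence Q (l Q) P"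
      using rho_attained X by (auto simp: BZ_iff_Z_dominated)
    have "penalty \<Q> l P \<le> divergence Q (l Q) P"
      unfolding penalty_def using Q P by (intro INF_lower) auto
    have "0 \<le> ereal (\<integral>\<omega>. X \<omega> \<partial>P) + penalty \<Q> l P" using X P by blast
    also have "\<dots> \<le> ereal (\<integral>\<omega>. X \<omega> \<partial>P) + divergence Q (l Q) P"
      using \<open>penalty \<Q> l P \<le> divergence Q (l Q) P\<close> by (rule add_left_mono)
    finally have "0 \<le> ereal (\<integral>\<omega>. X \<omega> \<partial>P) + divergence Q (l Q) P" .
    then show ?thesis unfolding rho by (cases "divergence Q (l Q) P") auto
  qed
  then show "X \<in> (\<Inter>Q\<in>\<Q>. {X\<in>BZ \<Omega> Z. rho Q (l Q) X \<le> 0})" using X by auto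
qed

end

theorem lemma4p1:
  fixes \<Omega> :: "((real^'d)^'t) set" and d0 :: 'd and Z :: "(real^'d)^'t \<Rightarrow> real"
    and \<Q> :: "((real^'d)^'t) measure set"
    and l :: "((real^'d)^'t) measure \<Rightarrow> real \<Rightarrow> real"
  assumes Omega_ne: "\<Omega> \<noteq> {}"
    and Omega_sub: "\<Omega> \<subseteq> {x. \<forall>t. 0 < x $ t $ d0}"
    and Z_cont: "continuous_on \<Omega> Z"
    and Z_ge1: "\<forall>\<omega>\<in>\<Omega>. 1 \<le> Z \<omega>"
    and Z_compact: "\<forall>z::real. 0 \<le> z \<longrightarrow> compact {\<omega>\<in>\<Omega>. Z \<omega> \<le> z}"
    and Q_sub: "\<Q> \<subseteq> PZ \<Omega> Z"
    and Q_ne: "\<Q> \<noteq> {}"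
    and l1: "\<forall>Q\<in>\<Q>. mono (l Q) \<and> convex_on UNIV (l Q)
               \<and> filterlim (\<lambda>x. l Q x - x) at_top at_top
               \<and> filterlim (\<lambda>x. l Q x - x) at_top at_bot"
    and l2: "\<exists>\<phi>::real \<Rightarrow> real. mono_on {1..} \<phi> \<and> filterlim (\<lambda>x. \<phi> x / x) at_top at_top
               \<and> (\<exists>C::real. \<forall>Q\<in>\<Q>. integrable Q (\<lambda>\<omega>. l Q (\<phi> (Z \<omega>)))
                                   \<and> (\<integral>\<omega>. l Q (\<phi> (Z \<omega>)) \<partial>Q) \<le> C)"
    and l3: "\<forall>Q\<in>\<Q>. conj_fn (l Q) 1 = 0"
  shows "(\<forall>Q\<in>\<Q>.
            (\<forall>X\<in>BZ \<Omega> Z. \<bar>rho Q (l Q) X\<bar> \<noteq> \<infinity>)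
          \<and> convex_risk_measure \<Omega> (BZ \<Omega> Z) (\<lambda>X. real_of_ereal (rho Q (l Q) X))
          \<and> rho Q (l Q) (\<lambda>\<omega>. 0) = 0
          \<and> (\<forall>X\<in>BZ \<Omega> Z. \<exists>P\<in>PZ \<Omega> Z. absolutely_continuous Q P
               \<and> rho Q (l Q) X = ereal (\<integral>\<omega>. - X \<omega> \<partial>P)
                    - eexp Q (\<lambda>\<omega>. conj_fn (l Q) (enn2real (RN_deriv Q P \<omega>)))
               \<and> (\<forall>P'\<in>PZ \<Omega> Z. absolutely_continuous Q P' \<longrightarrow>
                    ereal (\<integral>\<omega>. - X \<omega> \<partial>P')
                      - eexp Q (\<lambda>\<omega>. conj_fn (l Q) (enn2real (RN_deriv Q P' \<omega>)))
                    \<le> rho Q (l Q) X)))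
        \<and> (\<exists>(\<alpha>::((real^'d)^'t) measure \<Rightarrow> ereal) (\<beta>::real \<Rightarrow> real).
              (\<forall>P\<in>PZ \<Omega> Z. 0 \<le> \<alpha> P)
            \<and> (INF P\<in>PZ \<Omega> Z. \<alpha> P) = 0
            \<and> mono_on {1..} \<beta> \<and> filterlim (\<lambda>x. \<beta> x / x) at_top at_top
            \<and> (\<forall>P\<in>PZ \<Omega> Z. eexp P (\<lambda>\<omega>. ereal (\<beta> (Z \<omega>))) \<le> \<alpha> P)
            \<and> msum (\<Inter>Q\<in>\<Q>. {X\<in>BZ \<Omega> Z. rho Q (l Q) X \<le> 0}) (Bplus \<Omega>)
              = msum {X\<in>BZ \<Omega> Z. \<forall>P\<in>PZ \<Omega> Z. 0 \<le> ereal (\<integral>\<omega>. X \<omega> \<partial>P) + \<alpha> P} (Bplus \<Omega>))"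
proof -
  obtain \<phi> C where mono_phi: "mono_on {1..} \<phi>" and phi_superlinear: "filterlim (\<lambda>x. \<phi> x / x) at_top at_top"
    and l_phi_Z: "\<And>Q. Q \<in> \<Q> \<Longrightarrow> integrable Q (\<lambda>\<omega>. l Q (\<phi> (Z \<omega>))) \<and> (\<integral>\<omega>. l Q (\<phi> (Z \<omega>)) \<partial>Q) \<le> C"
    using l2 by blast
  interpret loss_family \<Omega> Z \<Q> l \<phi> C
  proof (rule loss_family.intro)
    fix Q assume "Q \<in> \<Q>"
    then show "loss_risk Q \<Omega> Z (l Q) \<phi> C"
      using Q_sub l1 l3 l_phi_Z mono_phi phi_superlinear Z_ge1 Z_cont
      unfolding loss_risk_def loss_risk_axioms_def PZ_def by auto
  qed (rule Q_ne)
  show ?thesis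
    unfolding divergence_def[symmetric]
    using risk_measure_properties penalty_nonneg INF_penalty penalty_ge_growth acceptance_set_eq
      mono_phi superlinear_minus_const[OF phi_superlinear, of C]
    by (intro conjI exI[of _ "penalty \<Q> l"] exI[of _ "\<lambda>x. \<phi> x - C"])
       (auto simp: mono_on_def)
qed

end
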